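(* For every $\varphi\in\mathcal{L}_{\mathrm{CL}}$: $\vdash_{\mathrm{CL}^{\mathrm{FI}}}\varphi$ if and only if $\vdash_{\mathrm{CL}}\varphi$.
   Context: $N=\{1,\dots,n\}$ is a finite set of agents, $\mathrm{Prop}$ a countable set of atoms. $\mathcal{L}_{\mathrm{CL}}$: $\varphi ::= p\mid\neg\varphi\mid(\varphi\wedge\psi)\mid[C]\varphi$ ($C\subseteq N$); $\mathcal{L}_{\mathrm{CL}^{\mathrm{FI}}}$ additionally has a primitive modality $\mathrm{FI}_C(\varphi)$. Coalition Logic $\mathrm{CL}$ (Pauly's axiomatization) over $\mathcal{L}_{\mathrm{CL}}$: all propositional tautologies; $\neg[C]\bot$; $[C]\top$; $\neg[\emptyset]\neg\varphi\to[N]\varphi$; $[C](\varphi\wedge\psi)\to[C]\varphi$; $[C_1]\varphi_1\wedge[C_2]\varphi_2\to[C_1\cup C_2](\varphi_1\wedge\varphi_2)$ for $C_1\cap C_2=\emptyset$; modus ponens; rule RE: from $\varphi\leftrightarrow\psi$ infer $[C]\varphi\leftrightarrow[C]\psi$. $\mathrm{CL}^{\mathrm{FI}}$ consists of these schemes and rules instantiated over $\mathcal{L}_{\mathrm{CL}^{\mathrm{FI}}}$ plus the axiom $\mathrm{FI}_C(\varphi)\leftrightarrow(\neg[C]\varphi\wedge\neg[C]\neg\varphi)$. *)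

theory Defs
  imports Main
begin

text \<open>Formulas over atoms of type nat (Prop countable), coalitions are sets of agents (nat).
  The single datatype covers L_CL^FI; L_CL is the FI-free fragment.\<close>

datatype fm =
    Atom nat
  | Neg fm
  | And fm fm
  | Coal "nat set" fm
  | FI "nat set" fm

definition Top :: fm where "Top = Neg (And (Atom 0) (Neg (Atom 0)))"
definition Bot :: fm where "Bot = Neg Top"
definition Imp :: "fm \<Rightarrow> fm \<Rightarrow> fm" where "Imp a b = Neg (And a (Neg b))"
definition Iff :: "fm \<Rightarrow> fm \<Rightarrow> fm" where "Iff a b = And (Imp a b) (Imp b a)"

fun in_lang :: "bool \<Rightarrow> nat \<Rightarrow> fm \<Rightarrow> bool" where
  "in_lang b n (Atom p) = True"
| "in_lang b n (Neg a) = in_lang b n a"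
| "in_lang b n (And a c) = (in_lang b n a \<and> in_lang b n c)"
| "in_lang b n (Coal C a) = (C \<subseteq> {1..n} \<and> in_lang b n a)"
| "in_lang b n (FI C a) = (b \<and> C \<subseteq> {1..n} \<and> in_lang b n a)"

fun peval :: "(fm \<Rightarrow> bool) \<Rightarrow> fm \<Rightarrow> bool" where
  "peval V (Atom p) = V (Atom p)"
| "peval V (Neg a) = (\<not> peval V a)"
| "peval V (And a c) = (peval V a \<and> peval V c)"
| "peval V (Coal C a) = V (Coal C a)"
| "peval V (FI C a) = V (FI C a)"

definition taut :: "fm \<Rightarrow> bool" where
  "taut \<phi> = (\<forall>V. peval V \<phi>)"

inductive prov :: "bool \<Rightarrow> nat \<Rightarrow> fm \<Rightarrow> bool" for b :: bool and n :: nat where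
  Taut: "in_lang b n \<phi> \<Longrightarrow> taut \<phi> \<Longrightarrow> prov b n \<phi>"
| NotBot: "C \<subseteq> {1..n} \<Longrightarrow> prov b n (Neg (Coal C Bot))"
| CTop: "C \<subseteq> {1..n} \<Longrightarrow> prov b n (Coal C Top)"
| NMax: "in_lang b n \<phi> \<Longrightarrow>
     prov b n (Imp (Neg (Coal {} (Neg \<phi>))) (Coal {1..n} \<phi>))"
| Mono: "C \<subseteq> {1..n} \<Longrightarrow> in_lang b n \<phi> \<Longrightarrow> in_lang b n \<psi> \<Longrightarrow>
     prov b n (Imp (Coal C (And \<phi> \<psi>)) (Coal C \<phi>))"
| Super: "C1 \<subseteq> {1..n} \<Longrightarrow> C2 \<subseteq> {1..n} \<Longrightarrow> C1 \<inter> C2 = {} \<Longrightarrow>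
     in_lang b n \<phi>1 \<Longrightarrow> in_lang b n \<phi>2 \<Longrightarrow>
     prov b n (Imp (And (Coal C1 \<phi>1) (Coal C2 \<phi>2)) (Coal (C1 \<union> C2) (And \<phi>1 \<phi>2)))"
| FIax: "b \<Longrightarrow> C \<subseteq> {1..n} \<Longrightarrow> in_lang b n \<phi> \<Longrightarrow>
     prov b n (Iff (FI C \<phi>) (And (Neg (Coal C \<phi>)) (Neg (Coal C (Neg \<phi>)))))"
| MP: "prov b n (Imp \<phi> \<psi>) \<Longrightarrow> prov b n \<phi> \<Longrightarrow> prov b n \<psi>"
| RE: "C \<subseteq> {1..n} \<Longrightarrow> prov b n (Iff \<phi> \<psi>) \<Longrightarrow> prov b n (Iff (Coal C \<phi>) (Coal C \<psi>))"

abbreviation provCL :: "nat \<Rightarrow> fm \<Rightarrow> bool" where "provCL n \<equiv> prov False n"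
abbreviation provCLFI :: "nat \<Rightarrow> fm \<Rightarrow> bool" where "provCLFI n \<equiv> prov True n"

end

theory Submission
  imports Defs
begin

text \<open>Replacing every \<open>FI\<^sub>C(\<phi>)\<close> by its defining formula \<open>\<not>[C]\<phi> \<and> \<not>[C]\<not>\<phi>\<close> is the identity on
  \<open>L\<^sub>C\<^sub>L\<close> and maps \<open>CL\<^sup>F\<^sup>I\<close>-derivations to \<open>CL\<close>-derivations: the translation commutes with the
  connectives, so axioms go to instances of the same schemes, and the \<open>FI\<close>-axiom becomes an
  instance of \<open>X \<leftrightarrow> X\<close>. Conversely \<open>CL\<^sup>F\<^sup>I\<close> contains every axiom and rule of \<open>CL\<close>.\<close>

primrec elim_FI :: "fm \<Rightarrow> fm" where
  "elim_FI (Atom p) = Atom p"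
| "elim_FI (Neg a) = Neg (elim_FI a)"
| "elim_FI (And a c) = And (elim_FI a) (elim_FI c)"
| "elim_FI (Coal C a) = Coal C (elim_FI a)"
| "elim_FI (FI C a) = And (Neg (Coal C (elim_FI a))) (Neg (Coal C (Neg (elim_FI a))))"

lemma elim_FI_simps [simp]:
  "elim_FI Top = Top"
  "elim_FI Bot = Bot"
  "elim_FI (Imp a c) = Imp (elim_FI a) (elim_FI c)"
  "elim_FI (Iff a c) = Iff (elim_FI a) (elim_FI c)"
  by (simp_all add: Top_def Bot_def Imp_def Iff_def)

lemma in_lang_simps [simp]:
  "in_lang b n Top"
  "in_lang b n Bot"
  "in_lang b n (Imp a c) \<longleftrightarrow> in_lang b n a \<and> in_lang b n c"
  "in_lang b n (Iff a c) \<longleftrightarrow> in_lang b n a \<and> in_lang b n c"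
  by (auto simp: Top_def Bot_def Imp_def Iff_def)

lemma elim_FI_ident: "in_lang False n \<phi> \<Longrightarrow> elim_FI \<phi> = \<phi>"
  by (induction \<phi>) auto

lemma in_lang_elim_FI: "in_lang b n \<phi> \<Longrightarrow> in_lang False n (elim_FI \<phi>)"
  by (induction \<phi>) auto

lemma in_lang_True: "in_lang b n \<phi> \<Longrightarrow> in_lang True n \<phi>"
  by (induction \<phi>) auto

lemma peval_elim_FI: "peval V (elim_FI \<phi>) = peval (\<lambda>\<psi>. peval V (elim_FI \<psi>)) \<phi>"
  by (induction \<phi>) auto

lemma taut_elim_FI: "taut \<phi> \<Longrightarrow> taut (elim_FI \<phi>)"
  unfolding taut_def by (metis peval_elim_FI)

lemma prov_Iff_refl: "in_lang b n \<phi> \<Longrightarrow> prov b n (Iff \<phi> \<phi>)"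
  by (rule prov.Taut) (auto simp: taut_def Iff_def Imp_def)

lemma provCL_elim_FI: "prov b n \<phi> \<Longrightarrow> provCL n (elim_FI \<phi>)"
proof (induction rule: prov.induct)
  case (Taut \<phi>)
  then show ?case by (simp add: prov.Taut in_lang_elim_FI taut_elim_FI)
next
  case (NotBot C)
  then show ?case by (simp add: prov.NotBot)
next
  case (CTop C)
  then show ?case by (simp add: prov.CTop)
next
  case (NMax \<phi>)
  then show ?case using prov.NMax[of False n "elim_FI \<phi>"] by (simp add: in_lang_elim_FI)
next
  case (Mono C \<phi> \<psi>)
  then show ?case by (simp add: prov.Mono in_lang_elim_FI)
next
  case (Super C1 C2 \<phi>1 \<phi>2)
  then show ?case by (simp add: prov.Super in_lang_elim_FI)
next
  case (FIax C \<phi>)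
  then show ?case by (simp add: prov_Iff_refl in_lang_elim_FI)
next
  case (MP \<phi> \<psi>)
  then show ?case using prov.MP by auto
next
  case (RE C \<phi> \<psi>)
  then show ?case by (simp add: prov.RE)
qed

lemma provCLFI_if_prov: "prov b n \<phi> \<Longrightarrow> provCLFI n \<phi>"
proof (induction rule: prov.induct)
  case (Taut \<phi>)
  then show ?case by (simp add: prov.Taut in_lang_True)
next
  case (NotBot C)
  then show ?case by (rule prov.NotBot)
next
  case (CTop C)
  then show ?case by (rule prov.CTop)
next
  case (NMax \<phi>)
  then show ?case using prov.NMax[of True n \<phi>] in_lang_True by blast
next
  case (Mono C \<phi> \<psi>)
  then show ?case by (simp add: prov.Mono in_lang_True)
next
  case (Super C1 C2 \<phi>1 \<phi>2)
  then show ?case by (simp add: prov.Super in_lang_True)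
next
  case (FIax C \<phi>)
  then show ?case by (simp add: prov.FIax in_lang_True)
next
  case (MP \<phi> \<psi>)
  then show ?case using prov.MP by blast
next
  case (RE C \<phi> \<psi>)
  then show ?case by (simp add: prov.RE)
qed

theorem mainTheorem19:
  fixes n :: nat and \<phi> :: fm
  assumes "in_lang False n \<phi>"
  shows "provCLFI n \<phi> \<longleftrightarrow> provCL n \<phi>"
proof
  assume "provCLFI n \<phi>"
  then show "provCL n \<phi>"
    using provCL_elim_FI elim_FI_ident[OF assms] by metis
next
  assume "provCL n \<phi>"
  then show "provCLFI n \<phi>"
    by (rule provCLFI_if_prov)
qed

end
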